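(* Every $1$-Sperner hypergraph ${\cal H}=(V,{\cal E})$ is equilizable, i.e., there exist a weight function $w:V\to\mathbb{Z}_{\ge0}$ and a threshold $t\in\mathbb{Z}_{\ge0}$ such that for every $X\subseteq V$, $\sum_{x\in X}w(x)=t$ if and only if $X\in{\cal E}$.
   Context: A hypergraph ${\cal H}=(V,{\cal E})$ consists of a finite vertex set $V$ and a set ${\cal E}$ of subsets of $V$. It is $1$-Sperner if every two distinct hyperedges $e,f$ satisfy $\min\{|e\setminus f|,|f\setminus e|\}=1$. *)

theory Defs
  imports Main
begin

definition hypergraph :: "'a set \<Rightarrow> 'a set set \<Rightarrow> bool" where
  "hypergraph V E \<longleftrightarrow> finite V \<and> (\<forall>e\<in>E. e \<subseteq> V)"

definition one_sperner :: "'a set set \<Rightarrow> bool" where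
  "one_sperner E \<longleftrightarrow>
     (\<forall>e\<in>E. \<forall>f\<in>E. e \<noteq> f \<longrightarrow> min (card (e - f)) (card (f - e)) = 1)"

definition equilizable :: "'a set \<Rightarrow> 'a set set \<Rightarrow> bool" where
  "equilizable V E \<longleftrightarrow>
     (\<exists>(w :: 'a \<Rightarrow> nat) (t :: nat). \<forall>X. X \<subseteq> V \<longrightarrow> ((\<Sum>x\<in>X. w x) = t \<longleftrightarrow> X \<in> E))"

end

theory Submission
  imports Defs
begin

(*
  Choose a vertex z such that every edge through z and every edge avoiding z differ exactly
  in z; any z in e0 - f, for an edge e0 of minimum and an edge f of maximum size, will do.
  With V1 the vertices other than z lying in every edge avoiding z, the edges through z are
  the sets insert z e with e \<subseteq> V1, and the edges avoiding z are the sets V1 \<union> g with g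
  inside V2 = V - {z} - V1. Both families are again 1-Sperner, so by induction on |V| they
  have equilizing weights (w1, t1) and (w2, t2), which are positive unless the family is empty.
  Weight V1 by w1, V2 by a * w2 with a > w1(V1) and a > t1, and z by t - t1 where
  t = w1(V1) + a * t2: the weight of a set then splits into two base-a digits and equals t
  exactly on the edges.
*)

lemma card_1_mem_singleton: "card A = 1 \<Longrightarrow> x \<in> A \<Longrightarrow> A = {x}"
  by (auto simp: card_1_singleton_iff)

lemma add_mult_eq_add_mult_iff:
  fixes x y u v a :: nat
  assumes "x < a" "u < a"
  shows "x + a * y = u + a * v \<longleftrightarrow> x = u \<and> y = v"
proof
  assume h: "x + a * y = u + a * v"
  have "x = (x + a * y) mod a" using assms by simp
  also have "\<dots> = u" using h assms by simp
  finally have "x = u" .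
  with h \<open>x < a\<close> show "x = u \<and> y = v" by simp
qed simp

lemma sum_subset_eq_sum_iff:
  fixes w :: "'a \<Rightarrow> nat"
  assumes "finite S" "\<forall>x\<in>S. 0 < w x" "A \<subseteq> S"
  shows "sum w A = sum w S \<longleftrightarrow> A = S"
proof
  assume "sum w A = sum w S"
  moreover have "sum w S = sum w A + sum w (S - A)"
    using assms by (metis add.commute sum.subset_diff)
  ultimately have "sum w (S - A) = 0" by simp
  then have "\<forall>x\<in>S - A. w x = 0" using assms by (simp add: sum_eq_0_iff)
  then show "A = S" using assms by force
qed simp

lemma one_sperner_antichain:
  assumes "one_sperner E" "e \<in> E" "g \<in> E" "e \<subseteq> g"
  shows "e = g"
proof (rule ccontr)
  assume "e \<noteq> g"
  then have "min (card (e - g)) (card (g - e)) = 1"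
    using assms unfolding one_sperner_def by blast
  moreover have "e - g = {}" using \<open>e \<subseteq> g\<close> by blast
  ultimately show False by simp
qed

lemma one_sperner_card_diff:
  assumes "one_sperner E" "e \<in> E" "g \<in> E" "e \<noteq> g" "finite e" "finite g" "card e \<le> card g"
  shows "card (e - g) = 1"
proof -
  have "card (e - g) = card e - card (e \<inter> g)" "card (g - e) = card g - card (e \<inter> g)"
    using assms by (simp_all add: card_Diff_subset_Int Int_commute)
  moreover have "min (card (e - g)) (card (g - e)) = 1"
    using assms unfolding one_sperner_def by blast
  ultimately show ?thesis using \<open>card e \<le> card g\<close> by (simp add: min_def split: if_splits)
qed

lemma one_sperner_diff_singleton:
  assumes "one_sperner E" "e \<in> E" "g \<in> E" "finite e" "finite g" "card e \<le> card g"
    and "z \<in> e" "z \<notin> g"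
  shows "e - g = {z}"
proof -
  have "card (e - g) = 1"
    using assms by (intro one_sperner_card_diff[of E]) auto
  then show ?thesis using \<open>z \<in> e\<close> \<open>z \<notin> g\<close> by (simp add: card_1_mem_singleton)
qed

lemma one_sperner_image:
  assumes "one_sperner E" "F \<subseteq> E" "\<forall>e\<in>F. \<forall>g\<in>F. f e - f g = e - g"
  shows "one_sperner (f ` F)"
  unfolding one_sperner_def
proof (intro ballI impI)
  fix a b assume "a \<in> f ` F" "b \<in> f ` F" "a \<noteq> b"
  then obtain e g where "e \<in> F" "g \<in> F" "a = f e" "b = f g" "e \<noteq> g" by blast
  then show "min (card (a - b)) (card (b - a)) = 1"
    using assms unfolding one_sperner_def by auto
qed

definition splitting_vertex :: "'a set set \<Rightarrow> 'a \<Rightarrow> bool" where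
  "splitting_vertex E z \<longleftrightarrow> (\<forall>e\<in>E. \<forall>g\<in>E. z \<in> e \<longrightarrow> z \<notin> g \<longrightarrow> e - g = {z})"

lemma splitting_vertex_of_extremal_edges:
  assumes sp: "one_sperner E" and fin: "\<forall>e\<in>E. finite e"
    and e0: "e0 \<in> E" and f: "f \<in> E"
    and min: "\<forall>g\<in>E. card e0 \<le> card g" and max: "\<forall>g\<in>E. card g \<le> card f"
    and "z \<in> e0" "z \<notin> f"
  shows "splitting_vertex E z"
  unfolding splitting_vertex_def
proof (intro ballI impI)
  fix e g assume e: "e \<in> E" and g: "g \<in> E" and "z \<in> e" "z \<notin> g"
  have e0f: "e0 - f = {z}"
    using assms by (intro one_sperner_diff_singleton[of E]) auto
  have ef: "e - f = {z}"
    using assms e \<open>z \<in> e\<close> by (intro one_sperner_diff_singleton[of E]) auto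
  have e0g: "e0 - g = {z}"
    using assms g \<open>z \<notin> g\<close> by (intro one_sperner_diff_singleton[of E]) auto
  have "e \<noteq> g" using \<open>z \<in> e\<close> \<open>z \<notin> g\<close> by blast
  then have "min (card (e - g)) (card (g - e)) = 1"
    using sp e g unfolding one_sperner_def by blast
  then consider "card (e - g) = 1" | "card (g - e) = 1" by (simp add: min_def split: if_splits)
  then show "e - g = {z}"
  proof cases
    case 1
    then show ?thesis using \<open>z \<in> e\<close> \<open>z \<notin> g\<close> by (simp add: card_1_mem_singleton)
  next
    case 2
    show ?thesis
    proof (cases "g = f")
      case True
      with ef show ?thesis by simp
    next
      case False
      then have "card (g - f) = 1"
        using sp g f fin max by (intro one_sperner_card_diff[of E]) auto
      then obtain y where y: "g - f = {y}" by (meson card_1_singletonE)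
      then have "y \<noteq> z" using \<open>z \<notin> g\<close> by blast
      then have "y \<notin> e" "y \<notin> e0" using y ef e0f by blast+
      then have "y \<in> g - e" using y by blast
      then have "g - e = {y}" by (rule card_1_mem_singleton[OF 2])
      have "e0 \<subseteq> e"
      proof
        fix u assume "u \<in> e0"
        then have "u = z \<or> u \<in> g" using e0g by (cases "u \<in> g") auto
        moreover have "u \<notin> g - e" using \<open>g - e = {y}\<close> \<open>u \<in> e0\<close> \<open>y \<notin> e0\<close> by auto
        ultimately show "u \<in> e" using \<open>z \<in> e\<close> by auto
      qed
      then have "e0 = e" using one_sperner_antichain[OF sp e0 e] by blast
      with e0g show ?thesis by simp
    qed
  qed
qed

lemma one_sperner_splitting_vertex_exists:
  assumes fin: "finite V" and sub: "\<forall>e\<in>E. e \<subseteq> V" and sp: "one_sperner E" and "V \<noteq> {}"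
  obtains z where "z \<in> V" "splitting_vertex E z"
proof -
  have fin_e: "\<forall>e\<in>E. finite e" using fin sub finite_subset by blast
  have card_bound: "\<forall>e\<in>E. card e < card V + 1"
    using fin sub by (simp add: card_mono le_imp_less_Suc)
  show ?thesis
  proof (cases "\<forall>e\<in>E. \<forall>g\<in>E. card e = card g")
    case True
    obtain z where "z \<in> V" using \<open>V \<noteq> {}\<close> by blast
    moreover have "splitting_vertex E z"
      unfolding splitting_vertex_def
    proof (intro ballI impI)
      fix e g assume e: "e \<in> E" and g: "g \<in> E" and "z \<in> e" "z \<notin> g"
      moreover have "card e \<le> card g" using True e g by (metis order_refl)
      ultimately show "e - g = {z}"
        using fin_e by (intro one_sperner_diff_singleton[OF sp e g]) simp_all
    qed
    ultimately show ?thesis by (rule that)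
  next
    case False
    then obtain e where "e \<in> E" by blast
    obtain e0 where e0: "e0 \<in> E" and min: "\<forall>g\<in>E. card e0 \<le> card g"
      using ex_has_least_nat[of "\<lambda>g. g \<in> E" e card] \<open>e \<in> E\<close> by blast
    obtain f where f: "f \<in> E" and max: "\<forall>g\<in>E. card g \<le> card f"
      using ex_has_greatest_nat[of "\<lambda>g. g \<in> E" e card] \<open>e \<in> E\<close> card_bound by blast
    have "e0 \<noteq> f"
    proof
      assume "e0 = f"
      then have "card g = card e0" if "g \<in> E" for g
        using min max that by (simp add: order_antisym)
      with False show False by auto
    qed
    then have "card (e0 - f) = 1"
      using fin_e e0 f min by (intro one_sperner_card_diff[OF sp]) simp_all
    then obtain z where "e0 - f = {z}" by (meson card_1_singletonE)
    then have "z \<in> e0" "z \<notin> f" by auto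
    then have "splitting_vertex E z"
      by (rule splitting_vertex_of_extremal_edges[OF sp fin_e e0 f min max])
    moreover have "z \<in> V" using sub e0 \<open>z \<in> e0\<close> by blast
    ultimately show ?thesis using that by blast
  qed
qed

lemma splitting_vertex_decomposition:
  assumes sub: "\<forall>e\<in>E. e \<subseteq> V" and sp: "one_sperner E"
    and "z \<in> V" and split: "splitting_vertex E z"
    and V1_def: "V1 = {x \<in> V - {z}. \<forall>g\<in>E. z \<notin> g \<longrightarrow> x \<in> g}"
    and E1_def: "E1 = (\<lambda>e. e - {z}) ` {e\<in>E. z \<in> e}"
    and V2_def: "V2 = V - {z} - V1"
    and E2_def: "E2 = (\<lambda>g. g - V1) ` {g\<in>E. z \<notin> g}"
  shows "E = insert z ` E1 \<union> (\<lambda>g. V1 \<union> g) ` E2"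
    and "\<forall>e\<in>E1. e \<subseteq> V1" and "\<forall>g\<in>E2. g \<subseteq> V2"
    and "one_sperner E1" and "one_sperner E2"
    and "V1 \<subset> V" and "V2 \<subset> V" and "V1 \<inter> V2 = {}" and "z \<notin> V1 \<union> V2"
    and "V = insert z (V1 \<union> V2)"
proof -
  have edge_through_z: "e - {z} \<subseteq> V1" if "e \<in> E" "z \<in> e" for e
    using that sub split unfolding V1_def splitting_vertex_def by blast
  have edge_avoiding_z: "V1 \<subseteq> g" if "g \<in> E" "z \<notin> g" for g
    using that unfolding V1_def by blast
  have "insert z ` E1 = {e\<in>E. z \<in> e}"
    unfolding E1_def image_image by (force simp: insert_absorb)
  moreover have "(\<lambda>g. V1 \<union> g) ` E2 = {g\<in>E. z \<notin> g}"
    unfolding E2_def image_image using edge_avoiding_z by (force simp: Un_absorb1)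
  ultimately show "E = insert z ` E1 \<union> (\<lambda>g. V1 \<union> g) ` E2" by blast
  show "\<forall>e\<in>E1. e \<subseteq> V1" unfolding E1_def using edge_through_z by blast
  show "\<forall>g\<in>E2. g \<subseteq> V2" unfolding E2_def V2_def using sub by blast
  show "one_sperner E1" unfolding E1_def by (rule one_sperner_image[OF sp]) auto
  show "one_sperner E2" unfolding E2_def using edge_avoiding_z by (intro one_sperner_image[OF sp]) auto
  show "V1 \<subset> V" "V2 \<subset> V" using \<open>z \<in> V\<close> unfolding V1_def V2_def by auto
  show "V1 \<inter> V2 = {}" "z \<notin> V1 \<union> V2" unfolding V1_def V2_def by auto
  show "V = insert z (V1 \<union> V2)" using \<open>z \<in> V\<close> unfolding V1_def V2_def by auto
qed

definition equilizes :: "'a set \<Rightarrow> 'a set set \<Rightarrow> ('a \<Rightarrow> nat) \<Rightarrow> nat \<Rightarrow> bool" where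
  "equilizes V E w t \<longleftrightarrow> (\<forall>X. X \<subseteq> V \<longrightarrow> (sum w X = t \<longleftrightarrow> X \<in> E))"

lemma equilizable_iff: "equilizable V E \<longleftrightarrow> (\<exists>w t. equilizes V E w t)"
  unfolding equilizable_def equilizes_def by blast

lemma equilizesD: "equilizes V E w t \<Longrightarrow> X \<subseteq> V \<Longrightarrow> sum w X = t \<longleftrightarrow> X \<in> E"
  unfolding equilizes_def by blast

lemma one_sperner_equilizes_pos:
  assumes fin: "finite V" and sub: "\<forall>e\<in>E. e \<subseteq> V" and sp: "one_sperner E" and "E \<noteq> {}"
    and eq: "equilizes V E w t" and "x \<in> V"
  shows "0 < w x"
proof (rule ccontr)
  assume "\<not> 0 < w x"
  then have "w x = 0" by simp
  obtain e where e: "e \<in> E" using \<open>E \<noteq> {}\<close> by blast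
  then have "e \<subseteq> V" "finite e" using sub fin finite_subset by blast+
  have "sum w e = t" using equilizesD[OF eq \<open>e \<subseteq> V\<close>] e by blast
  then have "sum w (insert x e) = t" "sum w (e - {x}) = t"
    using \<open>finite e\<close> \<open>w x = 0\<close> by (simp_all add: sum.insert_if sum_diff1_nat)
  moreover have "insert x e \<subseteq> V" "e - {x} \<subseteq> V" using \<open>e \<subseteq> V\<close> \<open>x \<in> V\<close> by auto
  ultimately have "insert x e \<in> E" "e - {x} \<in> E" using equilizesD[OF eq] by blast+
  then have "e - {x} = insert x e"
    using one_sperner_antichain[OF sp] by blast
  then show False by blast
qed

lemma equilizable_positive:
  assumes fin: "finite V" and sub: "\<forall>e\<in>E. e \<subseteq> V" and sp: "one_sperner E"
    and "equilizable V E"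
  obtains w t where "\<forall>x\<in>V. 0 < w x" and "equilizes V E w t"
proof (cases "E = {}")
  case True
  have "equilizes V E (\<lambda>_. 1) (card V + 1)"
    unfolding equilizes_def using True fin by (auto dest: card_mono)
  then show ?thesis by (rule that[rotated]) simp
next
  case False
  obtain w t where "equilizes V E w t" using \<open>equilizable V E\<close> equilizable_iff by blast
  then show ?thesis
    using that one_sperner_equilizes_pos[OF fin sub sp False] by blast
qed

lemma glued_edges_iff:
  assumes X: "X \<subseteq> insert z (V1 \<union> V2)" and "V1 \<inter> V2 = {}" and "z \<notin> V1 \<union> V2"
    and E1: "\<forall>e\<in>E1. e \<subseteq> V1" and E2: "\<forall>g\<in>E2. g \<subseteq> V2"
  shows "X \<in> insert z ` E1 \<union> (\<lambda>g. V1 \<union> g) ` E2 \<longleftrightarrow>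
    (if z \<in> X then X \<inter> V2 = {} \<and> X \<inter> V1 \<in> E1 else V1 \<subseteq> X \<and> X \<inter> V2 \<in> E2)"
proof (cases "z \<in> X")
  case True
  have "X \<notin> (\<lambda>g. V1 \<union> g) ` E2" using True E2 assms(3) by blast
  moreover have "X \<in> insert z ` E1 \<longleftrightarrow> X \<inter> V2 = {} \<and> X \<inter> V1 \<in> E1"
  proof
    assume "X \<in> insert z ` E1"
    then obtain e where "e \<in> E1" "X = insert z e" by blast
    moreover have "e \<subseteq> V1" using E1 \<open>e \<in> E1\<close> by blast
    ultimately show "X \<inter> V2 = {} \<and> X \<inter> V1 \<in> E1" using assms(2,3) by (auto simp: Int_absorb2)
  next
    assume "X \<inter> V2 = {} \<and> X \<inter> V1 \<in> E1"
    moreover have "X = insert z (X \<inter> V1)" using X True calculation by blast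
    ultimately show "X \<in> insert z ` E1" by blast
  qed
  ultimately show ?thesis using True by simp
next
  case False
  have "X \<notin> insert z ` E1" using False by blast
  moreover have "X \<in> (\<lambda>g. V1 \<union> g) ` E2 \<longleftrightarrow> V1 \<subseteq> X \<and> X \<inter> V2 \<in> E2"
  proof
    assume "X \<in> (\<lambda>g. V1 \<union> g) ` E2"
    then obtain g where "g \<in> E2" "X = V1 \<union> g" by blast
    moreover have "g \<subseteq> V2" using E2 \<open>g \<in> E2\<close> by blast
    ultimately have "V1 \<subseteq> X" "X \<inter> V2 = g" using assms(2) by auto
    then show "V1 \<subseteq> X \<and> X \<inter> V2 \<in> E2" using \<open>g \<in> E2\<close> by simp
  next
    assume "V1 \<subseteq> X \<and> X \<inter> V2 \<in> E2"
    moreover have "X = V1 \<union> (X \<inter> V2)" using X False calculation by blast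
    ultimately show "X \<in> (\<lambda>g. V1 \<union> g) ` E2" by blast
  qed
  ultimately show ?thesis using False by simp
qed

lemma sum_glued_weights:
  fixes w1 w2 :: "'a \<Rightarrow> nat"
  assumes fin1: "finite V1" and fin2: "finite V2" and disj: "V1 \<inter> V2 = {}"
    and z: "z \<notin> V1 \<union> V2" and X: "X \<subseteq> insert z (V1 \<union> V2)"
  shows "(\<Sum>x\<in>X. if x = z then c else if x \<in> V1 then w1 x else a * w2 x) =
    (if z \<in> X then c else 0) + sum w1 (X \<inter> V1) + a * sum w2 (X \<inter> V2)"
    (is "sum ?w X = _")
proof -
  have fin: "finite (X \<inter> V1)" "finite (X \<inter> V2)" using fin1 fin2 by auto
  have "finite X" using X fin1 fin2 finite_subset by auto
  then have "sum ?w X = sum ?w (X \<inter> {z}) + sum ?w (X - {z})" by (rule sum.Int_Diff)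
  also have "X - {z} = X \<inter> V1 \<union> X \<inter> V2" using X z by auto
  also have "sum ?w (X \<inter> V1 \<union> X \<inter> V2) = sum ?w (X \<inter> V1) + sum ?w (X \<inter> V2)"
    using fin disj by (intro sum.union_disjoint) auto
  also have "sum ?w (X \<inter> V1) = sum w1 (X \<inter> V1)"
    using z by (intro sum.cong) auto
  also have "sum ?w (X \<inter> V2) = sum (\<lambda>x. a * w2 x) (X \<inter> V2)"
    using z disj by (intro sum.cong) auto
  also have "sum ?w (X \<inter> {z}) = (if z \<in> X then c else 0)"
    by (simp add: Int_insert_right)
  finally show ?thesis by (simp add: sum_distrib_left)
qed

lemma equilizable_glue:
  assumes fin1: "finite V1" and fin2: "finite V2" and disj: "V1 \<inter> V2 = {}"
    and z: "z \<notin> V1 \<union> V2" and E1: "\<forall>e\<in>E1. e \<subseteq> V1" and E2: "\<forall>g\<in>E2. g \<subseteq> V2"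
    and "one_sperner E1" "one_sperner E2" "equilizable V1 E1" "equilizable V2 E2"
  shows "equilizable (insert z (V1 \<union> V2)) (insert z ` E1 \<union> (\<lambda>g. V1 \<union> g) ` E2)"
proof -
  obtain w1 t1 where pos1: "\<forall>x\<in>V1. 0 < w1 x" and eq1: "equilizes V1 E1 w1 t1"
    using equilizable_positive[OF fin1 E1 \<open>one_sperner E1\<close> \<open>equilizable V1 E1\<close>] by blast
  obtain w2 t2 where pos2: "\<forall>x\<in>V2. 0 < w2 x" and eq2: "equilizes V2 E2 w2 t2"
    using equilizable_positive[OF fin2 E2 \<open>one_sperner E2\<close> \<open>equilizable V2 E2\<close>] by blast
  define W1 where "W1 = sum w1 V1"
  define a where "a = W1 + t1 + 1"
  define t where "t = W1 + a * t2"
  \<comment> \<open>If \<open>t1 > t\<close> then \<open>E1 = {}\<close>, and any weight of z exceeding t works.\<close>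
  define c where "c = (if t1 \<le> t then t - t1 else t + 1)"
  define w where "w = (\<lambda>x. if x = z then c else if x \<in> V1 then w1 x else a * w2 x)"
  have "equilizes (insert z (V1 \<union> V2)) (insert z ` E1 \<union> (\<lambda>g. V1 \<union> g) ` E2) w t"
    unfolding equilizes_def
  proof (intro allI impI)
    fix X assume X: "X \<subseteq> insert z (V1 \<union> V2)"
    define A where "A = X \<inter> V1"
    define B where "B = X \<inter> V2"
    have A: "A \<subseteq> V1" and B: "B \<subseteq> V2" unfolding A_def B_def by auto
    have "sum w1 A \<le> W1" unfolding W1_def using A fin1 by (simp add: sum_mono2)
    then have "sum w1 A < a" "t1 < a" "W1 < a" unfolding a_def by auto
    have sum_X: "sum w X = (if z \<in> X then c else 0) + sum w1 A + a * sum w2 B"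
      unfolding w_def A_def B_def by (rule sum_glued_weights[OF fin1 fin2 disj z X])
    have V1_iff: "sum w1 A = W1 \<longleftrightarrow> A = V1"
      unfolding W1_def using sum_subset_eq_sum_iff[OF fin1 pos1 A] .
    have E1_iff: "sum w1 A = t1 \<longleftrightarrow> A \<in> E1" using equilizesD[OF eq1 A] .
    have E2_iff: "sum w2 B = t2 \<longleftrightarrow> B \<in> E2" using equilizesD[OF eq2 B] .
    have "finite B" using B fin2 by (rule finite_subset)
    then have empty_iff: "sum w2 B = 0 \<longleftrightarrow> B = {}"
      using B pos2 by (force simp: sum_eq_0_iff)
    have "V1 \<subseteq> X \<longleftrightarrow> A = V1" unfolding A_def by blast
    then have edge_iff: "X \<in> insert z ` E1 \<union> (\<lambda>g. V1 \<union> g) ` E2 \<longleftrightarrow>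
        (if z \<in> X then B = {} \<and> A \<in> E1 else A = V1 \<and> B \<in> E2)"
      unfolding glued_edges_iff[OF X disj z E1 E2] A_def B_def by simp
    show "sum w X = t \<longleftrightarrow> X \<in> insert z ` E1 \<union> (\<lambda>g. V1 \<union> g) ` E2"
    proof (cases "z \<in> X")
      case False
      then have "sum w X = t \<longleftrightarrow> sum w1 A + a * sum w2 B = W1 + a * t2"
        using sum_X unfolding t_def by simp
      also have "\<dots> \<longleftrightarrow> sum w1 A = W1 \<and> sum w2 B = t2"
        by (rule add_mult_eq_add_mult_iff[OF \<open>sum w1 A < a\<close> \<open>W1 < a\<close>])
      also have "\<dots> \<longleftrightarrow> A = V1 \<and> B \<in> E2" using V1_iff E2_iff by simp
      finally show ?thesis using edge_iff False by simp
    next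
      case True
      show ?thesis
      proof (cases "t1 \<le> t")
        case True
        with \<open>z \<in> X\<close> have "sum w X = t \<longleftrightarrow> sum w1 A + a * sum w2 B = t1 + a * 0"
          using sum_X unfolding c_def by auto
        also have "\<dots> \<longleftrightarrow> sum w1 A = t1 \<and> sum w2 B = 0"
          by (rule add_mult_eq_add_mult_iff[OF \<open>sum w1 A < a\<close> \<open>t1 < a\<close>])
        also have "\<dots> \<longleftrightarrow> B = {} \<and> A \<in> E1" using E1_iff empty_iff by auto
        finally show ?thesis using edge_iff \<open>z \<in> X\<close> by simp
      next
        case False
        with \<open>z \<in> X\<close> have "sum w X \<noteq> t" using sum_X unfolding c_def by simp
        moreover have "A \<notin> E1" using E1_iff \<open>sum w1 A \<le> W1\<close> False unfolding t_def by auto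
        ultimately show ?thesis using edge_iff \<open>z \<in> X\<close> by simp
      qed
    qed
  qed
  then show ?thesis unfolding equilizable_iff by blast
qed

theorem proposition12:
  assumes "hypergraph V E" and "one_sperner E"
  shows "equilizable V E"
  using assms
proof (induction "card V" arbitrary: V E rule: less_induct)
  case less
  then have fin: "finite V" and sub: "\<forall>e\<in>E. e \<subseteq> V" and sp: "one_sperner E"
    unfolding hypergraph_def by auto
  show ?case
  proof (cases "V = {}")
    case True
    then have "equilizes V E (\<lambda>_. 0) (if {} \<in> E then 0 else 1)"
      using sub by (auto simp: equilizes_def)
    then show ?thesis unfolding equilizable_iff by blast
  next
    case False
    obtain z where "z \<in> V" and split: "splitting_vertex E z"
      using one_sperner_splitting_vertex_exists[OF fin sub sp False] by blast
    define V1 where "V1 = {x \<in> V - {z}. \<forall>g\<in>E. z \<notin> g \<longrightarrow> x \<in> g}"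
    define V2 where "V2 = V - {z} - V1"
    define E1 where "E1 = (\<lambda>e. e - {z}) ` {e\<in>E. z \<in> e}"
    define E2 where "E2 = (\<lambda>g. g - V1) ` {g\<in>E. z \<notin> g}"
    note parts =
      splitting_vertex_decomposition[OF sub sp \<open>z \<in> V\<close> split V1_def E1_def V2_def E2_def]
    have fin12: "finite V1" "finite V2" and "card V1 < card V" "card V2 < card V"
      using fin parts(6,7) by (auto intro: finite_subset psubset_card_mono)
    then have "equilizable V1 E1" "equilizable V2 E2"
      using parts(2-5) less.hyps unfolding hypergraph_def by blast+
    then have "equilizable (insert z (V1 \<union> V2)) E"
      using equilizable_glue[OF fin12 parts(8,9,2-5)] parts(1) by simp
    then show ?thesis using parts(10) by simp
  qed
qed

end
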